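(* Let $X$ be a compact metric space and $f\colon X\to X$ a positively $n$-expansive homeomorphism. Then the non-wandering set $\Omega(f)$ is finite if and only if $X$ is finite.
   Context: $f$ is positively $n$-expansive if there exists $c>0$ such that for every $x\in X$ the set $W^s_c(x)=\{y: d(f^k(y),f^k(x))\leq c \ \forall k\geq0\}$ has at most $n$ points. A point $x$ is non-wandering if for every open $U\ni x$ there is $k>0$ with $f^k(U)\cap U\neq\emptyset$; $\Omega(f)$ is the set of non-wandering points. *)

theory Defs
  imports "HOL-Analysis.Analysis"
begin

definition local_stable_set :: "('a::metric_space \<Rightarrow> 'a) \<Rightarrow> real \<Rightarrow> 'a \<Rightarrow> 'a set" where
  "local_stable_set f c x = {y. \<forall>k::nat. dist ((f ^^ k) y) ((f ^^ k) x) \<le> c}"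

definition pos_n_expansive :: "nat \<Rightarrow> ('a::metric_space \<Rightarrow> 'a) \<Rightarrow> bool" where
  "pos_n_expansive n f \<longleftrightarrow>
     (\<exists>c>0. \<forall>x. finite (local_stable_set f c x) \<and> card (local_stable_set f c x) \<le> n)"

definition non_wandering_set :: "('a::topological_space \<Rightarrow> 'a) \<Rightarrow> 'a set" where
  "non_wandering_set f = {x. \<forall>U. open U \<and> x \<in> U \<longrightarrow> (\<exists>k>0. (f ^^ k) ` U \<inter> U \<noteq> {})}"

end

theory Submission
  imports Defs
begin

text \<open>If \<open>\<Omega>(f)\<close> is finite, its points are periodic and uniformly separated.
  Every forward orbit accumulates only on \<open>\<Omega>(f)\<close>, so it eventually stays close to
  \<open>\<Omega>(f)\<close>; by uniform continuity and the separation it then shadows the orbit of a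
  single point \<open>q \<in> \<Omega>(f)\<close>, i.e. some iterate \<open>f\<^sup>K x\<close> lies in the local stable set
  \<open>W\<^sup>s\<^sub>c(q)\<close>. If \<open>q\<close> has period \<open>N\<close>, then \<open>f\<^sup>N\<close> maps the finite set \<open>W\<^sup>s\<^sub>c(q)\<close> injectively
  into itself, so \<open>f\<^sup>K x\<close> and hence \<open>x\<close> is periodic. Thus every point is
  non-wandering and \<open>X = \<Omega>(f)\<close> is finite.\<close>

lemma periodic_point_in_non_wandering_set:
  assumes "0 < P" "(f ^^ P) x = x"
  shows "x \<in> non_wandering_set f"
  unfolding non_wandering_set_def
proof (intro CollectI allI impI)
  fix U assume "open U \<and> x \<in> U"
  then have "x \<in> (f ^^ P) ` U \<inter> U" using assms(2) by (metis IntI image_eqI)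
  then show "\<exists>k>0. (f ^^ k) ` U \<inter> U \<noteq> {}" using assms(1) by blast
qed

lemma non_wandering_set_image_subset:
  assumes "continuous_on UNIV f"
  shows "f ` non_wandering_set f \<subseteq> non_wandering_set f"
proof (rule image_subsetI)
  fix q assume q: "q \<in> non_wandering_set f"
  show "f q \<in> non_wandering_set f"
    unfolding non_wandering_set_def
  proof (intro CollectI allI impI)
    fix U assume U: "open U \<and> f q \<in> U"
    have "open (f -` U)" using continuous_imp_open_vimage[OF assms] U by auto
    with q U obtain k where k: "k > 0" "(f ^^ k) ` (f -` U) \<inter> f -` U \<noteq> {}"
      unfolding non_wandering_set_def by blast
    then obtain y where y: "f y \<in> U" "f ((f ^^ k) y) \<in> U" by blast
    have "(f ^^ k) (f y) = f ((f ^^ k) y)" by (simp add: funpow_swap1)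
    with y have "(f ^^ k) (f y) \<in> (f ^^ k) ` U \<inter> U" by (metis IntI image_eqI)
    with k(1) show "\<exists>k>0. (f ^^ k) ` U \<inter> U \<noteq> {}" by blast
  qed
qed

lemma orbit_limit_in_non_wandering_set:
  assumes "strict_mono s" "(\<lambda>j. (f ^^ s j) x) \<longlonglongrightarrow> z"
  shows "z \<in> non_wandering_set f"
  unfolding non_wandering_set_def
proof (intro CollectI allI impI)
  fix U assume U: "open U \<and> z \<in> U"
  then obtain N where N: "\<And>j. j \<ge> N \<Longrightarrow> (f ^^ s j) x \<in> U"
    using topological_tendstoD[OF assms(2)] unfolding eventually_sequentially by blast
  have "s N < s (Suc N)" using assms(1) by (simp add: strict_mono_def)
  then have "s (Suc N) = (s (Suc N) - s N) + s N" by simp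
  then have "(f ^^ (s (Suc N) - s N)) ((f ^^ s N) x) = (f ^^ s (Suc N)) x"
    by (metis funpow_add comp_apply)
  with N[of N] N[of "Suc N"] have "(f ^^ s (Suc N)) x \<in> (f ^^ (s (Suc N) - s N)) ` U \<inter> U"
    by (metis IntI image_eqI le_Suc_eq order_refl)
  with \<open>s N < s (Suc N)\<close> show "\<exists>k>0. (f ^^ k) ` U \<inter> U \<noteq> {}"
    by (metis empty_iff zero_less_diff)
qed

lemma orbit_eventually_in_nhd_non_wandering_set:
  fixes f :: "'a::metric_space \<Rightarrow> 'a"
  assumes "compact (UNIV :: 'a set)" "open U" "non_wandering_set f \<subseteq> U"
  shows "eventually (\<lambda>k. (f ^^ k) x \<in> U) sequentially"
proof (rule ccontr)
  assume not_eventually: "\<not> ?thesis"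
  then obtain s :: "nat \<Rightarrow> nat" where s: "strict_mono s" "\<And>j. (f ^^ s j) x \<in> - U"
    using not_eventually_sequentiallyD[OF not_eventually] by auto
  have "compact (- U)" using assms(1,2) by (metis closed_Int_compact inf_top.right_neutral open_closed)
  then obtain z r where "z \<in> - U" "strict_mono r" "((\<lambda>j. (f ^^ s j) x) \<circ> r) \<longlonglongrightarrow> z"
    using compact_imp_seq_compact s(2) unfolding seq_compact_def by meson
  moreover have "strict_mono (s \<circ> r)" using s(1) \<open>strict_mono r\<close> by (rule strict_mono_o)
  ultimately have "z \<in> non_wandering_set f" "z \<notin> U"
    using orbit_limit_in_non_wandering_set[of "s \<circ> r" f x z] by (auto simp: comp_def)
  with assms(3) show False by blast
qed

lemma orbit_eventually_close_to_non_wandering_set: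
  fixes f :: "'a::metric_space \<Rightarrow> 'a"
  assumes "compact (UNIV :: 'a set)" "e > 0"
  shows "eventually (\<lambda>k. \<exists>q\<in>non_wandering_set f. dist ((f ^^ k) x) q < e) sequentially"
proof -
  let ?U = "\<Union>q\<in>non_wandering_set f. ball q e"
  have "open ?U" "non_wandering_set f \<subseteq> ?U" using assms(2) by auto
  then have "eventually (\<lambda>k. (f ^^ k) x \<in> ?U) sequentially"
    by (rule orbit_eventually_in_nhd_non_wandering_set[OF assms(1)])
  then show ?thesis by (rule eventually_mono) (auto simp: dist_commute)
qed

lemma finite_set_uniformly_separated:
  fixes W :: "'a::metric_space set"
  assumes "finite W"
  obtains \<delta> where "\<delta> > 0" "\<And>p q. p \<in> W \<Longrightarrow> q \<in> W \<Longrightarrow> p \<noteq> q \<Longrightarrow> \<delta> \<le> dist p q"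
proof -
  have "\<forall>p\<in>W. \<exists>d>0. \<forall>q\<in>W. q \<noteq> p \<longrightarrow> d \<le> dist p q"
    using finite_set_avoid[OF assms] by blast
  then obtain d where d: "\<And>p. p \<in> W \<Longrightarrow> d p > 0"
    "\<And>p q. p \<in> W \<Longrightarrow> q \<in> W \<Longrightarrow> q \<noteq> p \<Longrightarrow> d p \<le> dist p q"
    by metis
  show thesis
  proof
    show "Min (insert 1 (d ` W)) > 0" using assms d(1) by simp
    show "Min (insert 1 (d ` W)) \<le> dist p q" if "p \<in> W" "q \<in> W" "p \<noteq> q" for p q
    proof -
      have "Min (insert 1 (d ` W)) \<le> d p" using assms \<open>p \<in> W\<close> by simp
      also have "d p \<le> dist p q" using d(2) that by simp
      finally show ?thesis .
    qed
  qed
qed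

lemma orbit_enters_stable_set_of_finite_invariant_set:
  fixes f :: "'a::metric_space \<Rightarrow> 'a"
  assumes "finite W" "f ` W \<subseteq> W" "uniformly_continuous_on UNIV f" "c > 0"
    and near: "\<And>e. e > 0 \<Longrightarrow> eventually (\<lambda>k. \<exists>q\<in>W. dist ((f ^^ k) x) q < e) sequentially"
  obtains K q where "q \<in> W" "(f ^^ K) x \<in> local_stable_set f c q"
proof -
  obtain \<delta> where \<delta>: "\<delta> > 0" "\<And>p q. p \<in> W \<Longrightarrow> q \<in> W \<Longrightarrow> p \<noteq> q \<Longrightarrow> \<delta> \<le> dist p q"
    using finite_set_uniformly_separated[OF assms(1)] by blast
  obtain \<eta> where \<eta>: "\<eta> > 0" "\<And>a b. dist a b < \<eta> \<Longrightarrow> dist (f a) (f b) < \<delta>/2"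
    using assms(3) \<delta>(1) unfolding uniformly_continuous_on_def by (metis UNIV_I half_gt_zero)
  define \<epsilon> where "\<epsilon> = min c (min \<eta> (\<delta>/2))"
  have "\<epsilon> > 0" using assms(4) \<eta>(1) \<delta>(1) by (simp add: \<epsilon>_def)
  then obtain K where K: "\<And>k. k \<ge> K \<Longrightarrow> \<exists>q\<in>W. dist ((f ^^ k) x) q < \<epsilon>"
    using near unfolding eventually_sequentially by blast
  obtain q where q: "q \<in> W" "dist ((f ^^ K) x) q < \<epsilon>" using K[of K] by blast
  \<comment> \<open>By the separation of \<open>W\<close>, the point of \<open>W\<close> near \<open>f y\<close> must be \<open>f p\<close>.\<close>
  have step: "dist (f y) (f p) < \<epsilon>"
    if p: "p \<in> W" and close: "dist y p < \<epsilon>" and next_near: "\<exists>p'\<in>W. dist (f y) p' < \<epsilon>"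
    for y p
  proof -
    obtain p' where p': "p' \<in> W" "dist (f y) p' < \<epsilon>" using next_near by blast
    have "dist (f y) (f p) < \<delta>/2" using \<eta>(2) close by (simp add: \<epsilon>_def)
    then have "dist (f p) p' < \<delta>"
      using p'(2) dist_triangle3[of "f p" p' "f y"] by (simp add: \<epsilon>_def)
    moreover have "f p \<in> W" using assms(2) p by blast
    ultimately have "f p = p'" using \<delta>(2) p'(1) by (meson not_le)
    then show ?thesis using p'(2) by simp
  qed
  have shadow: "dist ((f ^^ (m + K)) x) ((f ^^ m) q) < \<epsilon> \<and> (f ^^ m) q \<in> W" for m
  proof (induction m)
    case 0
    then show ?case using q by simp
  next
    case (Suc m)
    have "\<exists>p'\<in>W. dist (f ((f ^^ (m + K)) x)) p' < \<epsilon>" using K[of "Suc m + K"] by simp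
    then have "dist (f ((f ^^ (m + K)) x)) (f ((f ^^ m) q)) < \<epsilon>" using step Suc.IH by blast
    moreover have "f ((f ^^ m) q) \<in> W" using assms(2) Suc.IH by blast
    ultimately show ?case by simp
  qed
  have "\<epsilon> \<le> c" by (simp add: \<epsilon>_def)
  have "(f ^^ K) x \<in> local_stable_set f c q"
    unfolding local_stable_set_def
  proof (intro CollectI allI)
    fix k
    have "(f ^^ k) ((f ^^ K) x) = (f ^^ (k + K)) x" by (simp add: funpow_add)
    then show "dist ((f ^^ k) ((f ^^ K) x)) ((f ^^ k) q) \<le> c"
      using shadow[of k] \<open>\<epsilon> \<le> c\<close> by simp
  qed
  with q(1) show thesis by (rule that)
qed

lemma periodic_if_in_finite_stable_set_of_periodic_point:
  assumes "inj f" "finite (local_stable_set f c q)" "0 < N" "(f ^^ N) q = q"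
    and y: "y \<in> local_stable_set f c q"
  obtains P where "0 < P" "(f ^^ P) y = y"
proof -
  have invariant: "(f ^^ N) z \<in> local_stable_set f c q" if z: "z \<in> local_stable_set f c q" for z
    unfolding local_stable_set_def
  proof (intro CollectI allI)
    fix k
    have "dist ((f ^^ (k + N)) z) ((f ^^ (k + N)) q) \<le> c"
      using z unfolding local_stable_set_def by blast
    moreover have "(f ^^ (k + N)) z = (f ^^ k) ((f ^^ N) z)" by (simp add: funpow_add)
    moreover have "(f ^^ (k + N)) q = (f ^^ k) q" using assms(4) by (simp add: funpow_add)
    ultimately show "dist ((f ^^ k) ((f ^^ N) z)) ((f ^^ k) q) \<le> c" by simp
  qed
  have "((f ^^ N) ^^ m) y \<in> local_stable_set f c q" for m
    by (induction m) (use y invariant in auto)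
  then have "{z. \<exists>m. z = ((f ^^ N) ^^ m) y} \<subseteq> local_stable_set f c q" by blast
  then have "finite {z. \<exists>m. z = ((f ^^ N) ^^ m) y}" using assms(2) finite_subset by blast
  then obtain M where "0 < M" "((f ^^ N) ^^ M) y = y"
    using funpow_inj_finite[OF inj_fn[OF assms(1)]] by blast
  then have "(f ^^ (N * M)) y = y" by (simp add: funpow_mult)
  with assms(3) \<open>0 < M\<close> show thesis by (intro that[of "N * M"]) simp_all
qed

lemma periodic_if_iterate_periodic:
  assumes "inj f" "(f ^^ P) ((f ^^ K) x) = (f ^^ K) x"
  shows "(f ^^ P) x = x"
proof -
  have "(f ^^ K) ((f ^^ P) x) = (f ^^ (P + K)) x"
    by (subst add.commute) (simp add: funpow_add)
  also have "\<dots> = (f ^^ P) ((f ^^ K) x)" by (simp add: funpow_add)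
  also have "\<dots> = (f ^^ K) x" by (fact assms(2))
  finally show ?thesis using inj_fn[OF assms(1)] by (meson injD)
qed

lemma periodic_point_of_finite_invariant_set:
  assumes "inj f" "finite W" "f ` W \<subseteq> W" "q \<in> W"
  obtains N where "0 < N" "(f ^^ N) q = q"
proof -
  have "(f ^^ m) q \<in> W" for m
    by (induction m) (use assms(3,4) in auto)
  then have "{y. \<exists>m. y = (f ^^ m) q} \<subseteq> W" by blast
  then have "finite {y. \<exists>m. y = (f ^^ m) q}" using assms(2) finite_subset by blast
  then show thesis using funpow_inj_finite[OF assms(1)] that by blast
qed

lemma periodic_if_finite_non_wandering_set:
  fixes f :: "'a::metric_space \<Rightarrow> 'a"
  assumes "compact (UNIV :: 'a set)" "continuous_on UNIV f" "inj f"
    and fin: "finite (non_wandering_set f)"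
    and "c > 0" "\<And>q. finite (local_stable_set f c q)"
  obtains P where "0 < P" "(f ^^ P) x = x"
proof -
  have invariant: "f ` non_wandering_set f \<subseteq> non_wandering_set f"
    by (rule non_wandering_set_image_subset[OF assms(2)])
  have uniformly_continuous: "uniformly_continuous_on UNIV f"
    using compact_uniformly_continuous[OF assms(2,1)] .
  have near: "eventually (\<lambda>k. \<exists>q\<in>non_wandering_set f. dist ((f ^^ k) x) q < e) sequentially"
    if "e > 0" for e
    using assms(1) that by (rule orbit_eventually_close_to_non_wandering_set)
  obtain K q where q: "q \<in> non_wandering_set f" "(f ^^ K) x \<in> local_stable_set f c q"
    using orbit_enters_stable_set_of_finite_invariant_set[of "non_wandering_set f" f c x,
        OF fin invariant uniformly_continuous assms(5) near] by blast
  obtain N where "0 < N" "(f ^^ N) q = q"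
    using periodic_point_of_finite_invariant_set[OF assms(3) fin invariant q(1)] .
  then obtain P where "0 < P" "(f ^^ P) ((f ^^ K) x) = (f ^^ K) x"
    using periodic_if_in_finite_stable_set_of_periodic_point[OF assms(3,6) _ _ q(2)] by blast
  then show thesis using periodic_if_iterate_periodic[OF assms(3)] that by blast
qed

theorem lemma2p4:
  fixes f :: "'a::metric_space \<Rightarrow> 'a" and n :: nat
  assumes "compact (UNIV :: 'a set)"
    and "homeomorphism UNIV UNIV f g"
    and "pos_n_expansive n f"
  shows "finite (non_wandering_set f) \<longleftrightarrow> finite (UNIV :: 'a set)"
proof
  assume fin: "finite (non_wandering_set f)"
  have contf: "continuous_on UNIV f" using assms(2) unfolding homeomorphism_def by blast
  have injf: "inj f" using assms(2) unfolding homeomorphism_def by (metis UNIV_I injI)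
  obtain c where c: "c > 0" "\<And>q. finite (local_stable_set f c q)"
    using assms(3) unfolding pos_n_expansive_def by blast
  have "x \<in> non_wandering_set f" for x
  proof -
    obtain P where "0 < P" "(f ^^ P) x = x"
      using periodic_if_finite_non_wandering_set[OF assms(1) contf injf fin c] .
    then show ?thesis by (rule periodic_point_in_non_wandering_set)
  qed
  then have "UNIV \<subseteq> non_wandering_set f" by blast
  then show "finite (UNIV :: 'a set)" using fin by (rule finite_subset)
next
  assume "finite (UNIV :: 'a set)"
  then show "finite (non_wandering_set f)" by (rule finite_subset[OF subset_UNIV])
qed

end
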